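(* Let $A,B,C\in\mathbb R$ and $a,b,c\ge0$ with $\min\{a+b,b+c,c+a\}>1/2$ and $a+b+c>1$. Then for all measurable $f,g$ on $\mathbb R$, $$\big\|\langle\cdot+A\rangle^{-a}(f*g)\big\|_{L^1(\mathbb R)}\le K\,\|\langle\cdot+B\rangle^bf\|_{L^2(\mathbb R)}\|\langle\cdot+C\rangle^cg\|_{L^2(\mathbb R)},$$ where $K$ depends only on $a,b,c$ (not on $A,B,C$).
   Context: $\langle x\rangle=(1+|x|^2)^{1/2}$, and $*$ denotes convolution on $\mathbb R$. *)

theory Defs
  imports "HOL-Analysis.Analysis"
begin

definition jbr :: "real \<Rightarrow> real" where
  "jbr x = sqrt (1 + x\<^sup>2)"

text \<open>Convolution on the real line (Lebesgue/Bochner integral; value 0 where the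
  defining integral does not converge absolutely).\<close>
definition conv :: "(real \<Rightarrow> complex) \<Rightarrow> (real \<Rightarrow> complex) \<Rightarrow> real \<Rightarrow> complex" where
  "conv f g x = (LINT y|lebesgue. f y * g (x - y))"

definition L1norm :: "(real \<Rightarrow> complex) \<Rightarrow> ennreal" where
  "L1norm h = (\<integral>\<^sup>+ x. ennreal (cmod (h x)) \<partial>lebesgue)"

definition L2norm :: "(real \<Rightarrow> complex) \<Rightarrow> ennreal" where
  "L2norm h = (let I = (\<integral>\<^sup>+ x. ennreal ((cmod (h x))\<^sup>2) \<partial>lebesgue)
               in if I = \<infinity> then \<infinity> else ennreal (sqrt (enn2real I)))"

end

theory Submission
  imports Defs
begin

(* Write w_s(t) = <t>^(-s).  With F = <.+B>^b |f| and G = <.+C>^c |g| one has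
     ||<.+A>^(-a) (f*g)||_1 <= INT x INT y F(y) G(x-y) w_a(x+A) w_b(y+B) w_c(x-y+C).
   The heart of the proof is an elementary inequality for X, Y, Z >= 1: the
   product Z^(-a) X^(-b) Y^(-c) is bounded by a sum of three products of two
   powers, each exponent > 1/2 (the exponent of the largest of X, Y, Z is
   transferred onto the two others).  Applied to X = <y+B>, Y = <x-y+C>,
   Z = <x+A>, it splits the weight into three terms each involving only two of
   the three brackets; each such term is bounded by Fubini, translation
   invariance of Lebesgue measure and the Cauchy-Schwarz inequality, using that
   w_p is square integrable for p > 1/2.  The constant obtained is the sum of
   products of the L^2 norms of the weights, hence independent of A, B, C.
   All estimates are carried out for nonnegative extended-real integrals over
   Borel functions; Lebesgue measurable f, g are replaced by Borel versions. *)

definition ennsqrt :: "ennreal \<Rightarrow> ennreal" where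
  "ennsqrt I = (if I = \<infinity> then \<infinity> else ennreal (sqrt (enn2real I)))"

lemma ennsqrt_square: "(ennsqrt I)^2 = I"
  by (cases I) (auto simp: ennsqrt_def ennreal_power)

lemma ennsqrt_less_top: "I < \<infinity> \<Longrightarrow> ennsqrt I < \<infinity>"
  by (simp add: ennsqrt_def)

lemma ennreal_le_if_square_le:
  fixes x y :: ennreal
  assumes "x^2 \<le> y^2"
  shows "x \<le> y"
proof (cases y)
  case (real r)
  show ?thesis
  proof (cases x)
    case (real s)
    with assms \<open>y = ennreal r\<close> \<open>0 \<le> r\<close> have "s^2 \<le> r^2" by (simp add: ennreal_power)
    with real \<open>0 \<le> r\<close> have "s \<le> r" using abs_le_square_iff by fastforce
    then show ?thesis using real \<open>y = ennreal r\<close> by simp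
  next
    case top
    with assms \<open>y = ennreal r\<close> \<open>0 \<le> r\<close> show ?thesis by (simp add: ennreal_power top_unique)
  qed
qed simp

lemma le_ennsqrt_mult: "J^2 \<le> I1 * I2 \<Longrightarrow> J \<le> ennsqrt I1 * ennsqrt I2"
  by (rule ennreal_le_if_square_le) (simp add: power_mult_distrib ennsqrt_square)

definition nn_L2norm :: "(real \<Rightarrow> ennreal) \<Rightarrow> ennreal" where
  "nn_L2norm P = ennsqrt (\<integral>\<^sup>+t. P t ^ 2 \<partial>lborel)"

lemma nn_Cauchy_Schwarz:
  fixes P Q :: "real \<Rightarrow> ennreal"
  assumes "P \<in> borel_measurable borel" "Q \<in> borel_measurable borel"
  shows "(\<integral>\<^sup>+t. P t * Q t \<partial>lborel) \<le> nn_L2norm P * nn_L2norm Q"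
  unfolding nn_L2norm_def
  by (rule le_ennsqrt_mult, rule Cauchy_Schwarz_nn_integral) (use assms in simp_all)

lemma nn_integral_lborel_shift:
  fixes h :: "real \<Rightarrow> ennreal"
  assumes "h \<in> borel_measurable borel"
  shows "(\<integral>\<^sup>+t. h (t + A) \<partial>lborel) = (\<integral>\<^sup>+t. h t \<partial>lborel)"
  using nn_integral_real_affine[OF assms, of 1 A] by (simp add: add.commute)

lemma nn_integral_lborel_reflect:
  fixes h :: "real \<Rightarrow> ennreal"
  assumes "h \<in> borel_measurable borel"
  shows "(\<integral>\<^sup>+t. h (x - t) \<partial>lborel) = (\<integral>\<^sup>+t. h t \<partial>lborel)"
  using nn_integral_real_affine[OF assms, of "-1" x] by simp

lemma nn_L2norm_shift:
  fixes P :: "real \<Rightarrow> ennreal"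
  assumes [measurable]: "P \<in> borel_measurable borel"
  shows "nn_L2norm (\<lambda>t. P (t + A)) = nn_L2norm P"
  unfolding nn_L2norm_def using nn_integral_lborel_shift[of "\<lambda>t. P t ^ 2" A] by simp

lemma jbr_ge1: "1 \<le> jbr t"
  unfolding jbr_def by simp

lemma jbr_ge: "(1 + \<bar>t\<bar>) / 2 \<le> jbr t"
  unfolding jbr_def
proof (rule real_le_rsqrt)
  have "0 \<le> (\<bar>t\<bar> - 1)^2" by simp
  then have "(1 + \<bar>t\<bar>)^2 \<le> 4 * (1 + t^2)"
    by (simp add: power2_eq_square algebra_simps)
  then show "((1 + \<bar>t\<bar>) / 2)\<^sup>2 \<le> 1 + t\<^sup>2" by (simp add: power_divide)
qed

definition jweight :: "real \<Rightarrow> real \<Rightarrow> ennreal" where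
  "jweight s t = ennreal (jbr t powr (-s))"

lemma jweight_measurable [measurable]: "jweight s \<in> borel_measurable borel"
  unfolding jweight_def jbr_def by measurable

lemma jweight_inverse: "jweight (-s) t * jweight s t = 1"
proof -
  have "jweight (-s) t * jweight s t = ennreal (jbr t powr s * jbr t powr (-s))"
    by (simp add: jweight_def ennreal_mult)
  also have "jbr t powr s * jbr t powr (-s) = jbr t powr (s + -s)" by (rule powr_add[symmetric])
  finally show ?thesis using jbr_ge1[of t] by simp
qed

lemma jweight_square: "(jweight p t)^2 = jweight (2 * p) t"
proof -
  have "(jweight p t)^2 = ennreal (jbr t powr (-p) * jbr t powr (-p))"
    by (simp add: jweight_def power2_eq_square ennreal_mult)
  also have "jbr t powr (-p) * jbr t powr (-p) = jbr t powr (-(2 * p))"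
    by (simp add: powr_add[symmetric])
  finally show ?thesis by (simp add: jweight_def)
qed

lemma nn_integral_tail_powr_finite:
  assumes s: "s > 1"
  shows "(\<integral>\<^sup>+t. ennreal ((1 + t) powr (-s)) * indicator {0..} t \<partial>lborel) < \<infinity>"
proof -
  have "((\<lambda>x. x powr (-s)) has_integral -(1 powr (-s+1)) / (-s+1)) {1..}"
    by (rule has_integral_powr_to_inf) (use s in auto)
  then have "(\<integral>\<^sup>+x. ennreal (x powr (-s)) * indicator {1..} x \<partial>lborel) = ennreal (-(1 powr (-s+1)) / (-s+1))"
    by (rule nn_integral_has_integral_lebesgue'[rotated]) simp
  also have "(\<integral>\<^sup>+x. ennreal (x powr (-s)) * indicator {1..} x \<partial>lborel)
      = (\<integral>\<^sup>+t. ennreal ((1 + t) powr (-s)) * indicator {0..} t \<partial>lborel)"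
    using nn_integral_lborel_shift[of "\<lambda>x. ennreal (x powr (-s)) * indicator {1..} x" 1]
    by (simp add: add.commute indicator_def)
  finally show ?thesis by simp
qed

lemma nn_integral_jweight_finite:
  assumes s: "s > 1"
  shows "(\<integral>\<^sup>+t. jweight s t \<partial>lborel) < \<infinity>"
proof -
  define \<phi> where "\<phi> t = ennreal ((1 + t) powr (-s)) * indicator {0..} t" for t
  have [measurable]: "\<phi> \<in> borel_measurable borel" unfolding \<phi>_def by measurable
  have tail: "integral\<^sup>N lborel \<phi> < \<infinity>"
    unfolding \<phi>_def using nn_integral_tail_powr_finite[OF s] by simp
  have pointwise: "jweight s t \<le> ennreal (2 powr s) * (\<phi> t + \<phi> (-t))" for t
  proof -
    have "jbr t powr (-s) \<le> ((1 + \<bar>t\<bar>) / 2) powr (-s)"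
      by (rule powr_mono2') (use s jbr_ge[of t] in auto)
    also have "\<dots> = 2 powr s * (1 + \<bar>t\<bar>) powr (-s)"
      by (simp add: powr_divide powr_minus divide_simps)
    finally have "jweight s t \<le> ennreal (2 powr s) * ennreal ((1 + \<bar>t\<bar>) powr (-s))"
      unfolding jweight_def by (simp add: ennreal_mult[symmetric] ennreal_leI)
    also have "ennreal ((1 + \<bar>t\<bar>) powr (-s)) \<le> \<phi> t + \<phi> (-t)"
      by (cases "t \<ge> 0") (auto simp: \<phi>_def indicator_def)
    finally show ?thesis by (simp add: mult_left_mono)
  qed
  have "(\<integral>\<^sup>+t. jweight s t \<partial>lborel) \<le> (\<integral>\<^sup>+t. ennreal (2 powr s) * (\<phi> t + \<phi> (-t)) \<partial>lborel)"
    by (rule nn_integral_mono) (rule pointwise)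
  also have "\<dots> = ennreal (2 powr s) * (integral\<^sup>N lborel \<phi> + integral\<^sup>N lborel \<phi>)"
    using nn_integral_lborel_reflect[of \<phi> 0] by (simp add: nn_integral_cmult nn_integral_add)
  also have "\<dots> < \<infinity>"
    using tail by (simp add: ennreal_mult_less_top)
  finally show ?thesis .
qed

lemma nn_L2norm_jweight_finite: "p > 1/2 \<Longrightarrow> nn_L2norm (jweight p) < \<infinity>"
  unfolding nn_L2norm_def jweight_square
  by (intro ennsqrt_less_top nn_integral_jweight_finite) simp

lemma nn_L2norm_jweight_shift [simp]: "nn_L2norm (\<lambda>t. jweight p (t + A)) = nn_L2norm (jweight p)"
  by (rule nn_L2norm_shift) measurable

(* Bilinear convolution bound when each weight sits on one input:
   the double integral factorises, and Cauchy-Schwarz applies to each factor. *)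
lemma conv_bound_input_weights:
  fixes P Q R S :: "real \<Rightarrow> ennreal"
  assumes [measurable]: "P \<in> borel_measurable borel" "Q \<in> borel_measurable borel"
    "R \<in> borel_measurable borel" "S \<in> borel_measurable borel"
  shows "(\<integral>\<^sup>+x. (\<integral>\<^sup>+y. P y * Q (x - y) * (R y * S (x - y)) \<partial>lborel) \<partial>lborel)
     \<le> nn_L2norm P * nn_L2norm R * (nn_L2norm Q * nn_L2norm S)"
proof -
  have inner: "(\<integral>\<^sup>+x. Q (x - y) * S (x - y) \<partial>lborel) = (\<integral>\<^sup>+z. Q z * S z \<partial>lborel)" for y
    using nn_integral_lborel_shift[of "\<lambda>z. Q z * S z" "-y"] by simp
  have "(\<integral>\<^sup>+x. (\<integral>\<^sup>+y. P y * Q (x - y) * (R y * S (x - y)) \<partial>lborel) \<partial>lborel)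
     = (\<integral>\<^sup>+y. (\<integral>\<^sup>+x. P y * R y * (Q (x - y) * S (x - y)) \<partial>lborel) \<partial>lborel)"
    by (subst lborel_pair.Fubini') (auto simp: ac_simps)
  also have "\<dots> = (\<integral>\<^sup>+y. P y * R y \<partial>lborel) * (\<integral>\<^sup>+z. Q z * S z \<partial>lborel)"
    by (simp add: nn_integral_cmult inner nn_integral_multc)
  also have "\<dots> \<le> nn_L2norm P * nn_L2norm R * (nn_L2norm Q * nn_L2norm S)"
    by (intro mult_mono nn_Cauchy_Schwarz) auto
  finally show ?thesis .
qed

(* Bilinear convolution bound when one weight sits on an input and the other
   on the output variable: Cauchy-Schwarz in x for fixed y, then in y. *)
lemma conv_bound_input_output_weights:
  fixes P Q R S :: "real \<Rightarrow> ennreal"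
  assumes [measurable]: "P \<in> borel_measurable borel" "Q \<in> borel_measurable borel"
    "R \<in> borel_measurable borel" "S \<in> borel_measurable borel"
  shows "(\<integral>\<^sup>+x. (\<integral>\<^sup>+y. P y * Q (x - y) * (R y * S x) \<partial>lborel) \<partial>lborel)
     \<le> nn_L2norm P * nn_L2norm R * (nn_L2norm Q * nn_L2norm S)"
proof -
  let ?K = "nn_L2norm Q * nn_L2norm S"
  have inner: "(\<integral>\<^sup>+x. Q (x - y) * S x \<partial>lborel) \<le> ?K" for y
  proof -
    have "nn_L2norm (\<lambda>x. Q (x - y)) = nn_L2norm Q"
      using nn_L2norm_shift[of Q "-y"] by simp
    then show ?thesis using nn_Cauchy_Schwarz[of "\<lambda>x. Q (x - y)" S] by simp
  qed
  have "(\<integral>\<^sup>+x. (\<integral>\<^sup>+y. P y * Q (x - y) * (R y * S x) \<partial>lborel) \<partial>lborel)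
     = (\<integral>\<^sup>+y. (\<integral>\<^sup>+x. P y * R y * (Q (x - y) * S x) \<partial>lborel) \<partial>lborel)"
    by (subst lborel_pair.Fubini') (auto simp: ac_simps)
  also have "\<dots> = (\<integral>\<^sup>+y. P y * R y * (\<integral>\<^sup>+x. Q (x - y) * S x \<partial>lborel) \<partial>lborel)"
    by (simp add: nn_integral_cmult)
  also have "\<dots> \<le> (\<integral>\<^sup>+y. P y * R y * ?K \<partial>lborel)"
    by (intro nn_integral_mono mult_left_mono inner) simp
  also have "\<dots> = (\<integral>\<^sup>+y. P y * R y \<partial>lborel) * ?K"
    by (rule nn_integral_multc) measurable
  also have "\<dots> \<le> nn_L2norm P * nn_L2norm R * ?K"
    by (intro mult_right_mono nn_Cauchy_Schwarz) auto
  finally show ?thesis .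
qed

lemma exponent_transfer:
  fixes \<alpha> \<beta> \<gamma> :: real
  assumes "\<alpha> \<ge> 0" "\<alpha> + \<beta> > 1/2" "\<alpha> + \<gamma> > 1/2" "\<alpha> + \<beta> + \<gamma> > 1"
  obtains s where "0 \<le> s" "s \<le> \<alpha>" "\<beta> + s > 1/2" "\<gamma> + \<alpha> - s > 1/2"
proof -
  define m where "m = (\<alpha> + \<gamma> - \<beta>) / 2"
  consider "m < 0" | "m > \<alpha>" | "0 \<le> m \<and> m \<le> \<alpha>" by linarith
  then show ?thesis
  proof cases
    case 1 then show ?thesis using assms by (intro that[of 0]) (auto simp: m_def)
  next
    case 2 then show ?thesis using assms by (intro that[of \<alpha>]) (auto simp: m_def)
  next
    case 3 then show ?thesis using assms by (intro that[of m]) (auto simp: m_def field_simps)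
  qed
qed

lemma powr_transfer:
  fixes U V M \<alpha> \<beta> \<gamma> s :: real
  assumes "1 \<le> U" "1 \<le> V" "U \<le> M" "V \<le> M" "0 \<le> s" "s \<le> \<alpha>"
  shows "M powr (-\<alpha>) * U powr (-\<beta>) * V powr (-\<gamma>) \<le> U powr (-(\<beta> + s)) * V powr (-(\<gamma> + \<alpha> - s))"
proof -
  have "M powr (-\<alpha>) = M powr (-s) * M powr (-(\<alpha> - s))"
    by (simp add: powr_add[symmetric])
  also have "\<dots> \<le> U powr (-s) * V powr (-(\<alpha> - s))"
    using assms by (intro mult_mono powr_mono2') auto
  finally have "M powr (-\<alpha>) \<le> U powr (-s) * V powr (-(\<alpha> - s))" .
  then have "M powr (-\<alpha>) * (U powr (-\<beta>) * V powr (-\<gamma>))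
      \<le> U powr (-s) * V powr (-(\<alpha> - s)) * (U powr (-\<beta>) * V powr (-\<gamma>))"
    by (rule mult_right_mono) simp
  also have "\<dots> = (U powr (-s) * U powr (-\<beta>)) * (V powr (-(\<alpha> - s)) * V powr (-\<gamma>))"
    by (simp add: ac_simps)
  also have "\<dots> = U powr (-(\<beta> + s)) * V powr (-(\<gamma> + \<alpha> - s))"
    by (simp add: powr_add[symmetric] algebra_simps)
  finally show ?thesis by (simp add: ac_simps)
qed

(* The key elementary inequality: Z^(-a) X^(-b) Y^(-c) is dominated by three
   products of two powers with all exponents > 1/2, according to which of
   X, Y, Z is largest. *)
lemma three_term_domination:
  fixes a b c :: real
  assumes "a \<ge> 0" "b \<ge> 0" "c \<ge> 0" "a + b > 1/2" "b + c > 1/2" "c + a > 1/2" "a + b + c > 1"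
  obtains p1 q1 p2 q2 p3 q3 :: real
  where "p1 > 1/2" "q1 > 1/2" "p2 > 1/2" "q2 > 1/2" "p3 > 1/2" "q3 > 1/2"
    and "\<And>X Y Z. 1 \<le> X \<Longrightarrow> 1 \<le> Y \<Longrightarrow> 1 \<le> Z \<Longrightarrow>
      Z powr (-a) * X powr (-b) * Y powr (-c) \<le>
      X powr (-p1) * Y powr (-q1) + Y powr (-p2) * Z powr (-q2) + X powr (-p3) * Z powr (-q3)"
proof -
  obtain s1 where s1: "0 \<le> s1" "s1 \<le> a" "b + s1 > 1/2" "c + a - s1 > 1/2"
    using exponent_transfer[of a b c] assms by auto
  obtain s2 where s2: "0 \<le> s2" "s2 \<le> b" "c + s2 > 1/2" "a + b - s2 > 1/2"
    using exponent_transfer[of b c a] assms by auto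
  obtain s3 where s3: "0 \<le> s3" "s3 \<le> c" "b + s3 > 1/2" "a + c - s3 > 1/2"
    using exponent_transfer[of c b a] assms by auto
  show ?thesis
  proof (rule that[of "b + s1" "c + a - s1" "c + s2" "a + b - s2" "b + s3" "a + c - s3"])
    fix X Y Z :: real assume XYZ: "1 \<le> X" "1 \<le> Y" "1 \<le> Z"
    let ?T1 = "X powr (-(b + s1)) * Y powr (-(c + a - s1))"
    let ?T2 = "Y powr (-(c + s2)) * Z powr (-(a + b - s2))"
    let ?T3 = "X powr (-(b + s3)) * Z powr (-(a + c - s3))"
    have nonneg: "0 \<le> ?T1" "0 \<le> ?T2" "0 \<le> ?T3" by auto
    consider "X \<le> Z" "Y \<le> Z" | "Z \<le> X" "Y \<le> X" | "X \<le> Y" "Z \<le> Y" by linarith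
    then show "Z powr (-a) * X powr (-b) * Y powr (-c) \<le> ?T1 + ?T2 + ?T3"
    proof cases
      case 1
      have "Z powr (-a) * X powr (-b) * Y powr (-c) \<le> ?T1"
        by (rule powr_transfer) (use 1 XYZ s1 in auto)
      then show ?thesis using nonneg by linarith
    next
      case 2
      let ?rearranged = "X powr (-b) * Y powr (-c) * Z powr (-a)"
      have "?rearranged \<le> ?T2"
        by (rule powr_transfer) (use 2 XYZ s2 in auto)
      moreover have "Z powr (-a) * X powr (-b) * Y powr (-c) = ?rearranged" by simp
      ultimately show ?thesis using nonneg by linarith
    next
      case 3
      let ?rearranged = "Y powr (-c) * X powr (-b) * Z powr (-a)"
      have "?rearranged \<le> ?T3"
        by (rule powr_transfer) (use 3 XYZ s3 in auto)
      moreover have "Z powr (-a) * X powr (-b) * Y powr (-c) = ?rearranged" by simp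
      ultimately show ?thesis using nonneg by linarith
    qed
  qed (use s1 s2 s3 in simp_all)
qed

lemma jweight_domination:
  assumes "\<And>X Y Z. 1 \<le> X \<Longrightarrow> 1 \<le> Y \<Longrightarrow> 1 \<le> Z \<Longrightarrow>
      Z powr (-a) * X powr (-b) * Y powr (-c) \<le>
      X powr (-p1) * Y powr (-q1) + Y powr (-p2) * Z powr (-q2) + X powr (-p3) * Z powr (-q3)"
  shows "jweight a z * jweight b x * jweight c y
    \<le> jweight p1 x * jweight q1 y + jweight p2 y * jweight q2 z + jweight p3 x * jweight q3 z"
proof -
  let ?X = "jbr x" and ?Y = "jbr y" and ?Z = "jbr z"
  have "?Z powr (-a) * ?X powr (-b) * ?Y powr (-c) \<le>
      ?X powr (-p1) * ?Y powr (-q1) + ?Y powr (-p2) * ?Z powr (-q2) + ?X powr (-p3) * ?Z powr (-q3)"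
    using assms jbr_ge1 by blast
  then have "ennreal (?Z powr (-a) * ?X powr (-b) * ?Y powr (-c)) \<le>
      ennreal (?X powr (-p1) * ?Y powr (-q1) + ?Y powr (-p2) * ?Z powr (-q2) + ?X powr (-p3) * ?Z powr (-q3))"
    by (rule ennreal_leI)
  then show ?thesis
    by (simp add: jweight_def ennreal_mult ennreal_plus del: ennreal_plus[symmetric])
qed

(* The trilinear estimate for Borel functions: once the product of the three
   weights is dominated by three two-weight terms, each term is one of the
   bilinear bounds above (the middle one after the substitution y -> x - y). *)
lemma trilinear_weighted_bound:
  fixes F G :: "real \<Rightarrow> ennreal"
  assumes [measurable]: "F \<in> borel_measurable borel" "G \<in> borel_measurable borel"
    and dom: "\<And>x y z. jweight a z * jweight b x * jweight c y
      \<le> jweight p1 x * jweight q1 y + jweight p2 y * jweight q2 z + jweight p3 x * jweight q3 z"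
  shows "(\<integral>\<^sup>+x. (\<integral>\<^sup>+y. F y * G (x - y) * (jweight a (x + A) * jweight b (y + B) * jweight c (x - y + C)) \<partial>lborel) \<partial>lborel)
    \<le> (nn_L2norm (jweight p1) * nn_L2norm (jweight q1) + nn_L2norm (jweight p2) * nn_L2norm (jweight q2)
        + nn_L2norm (jweight p3) * nn_L2norm (jweight q3)) * nn_L2norm F * nn_L2norm G"
proof -
  define W1 where "W1 x y = jweight p1 (y + B) * jweight q1 (x - y + C)" for x y
  define W2 where "W2 x y = jweight p2 (x - y + C) * jweight q2 (x + A)" for x y
  define W3 where "W3 x y = jweight p3 (y + B) * jweight q3 (x + A)" for x y
  have [measurable]: "case_prod W1 \<in> borel_measurable (lborel \<Otimes>\<^sub>M lborel)"
    "case_prod W2 \<in> borel_measurable (lborel \<Otimes>\<^sub>M lborel)"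
    "case_prod W3 \<in> borel_measurable (lborel \<Otimes>\<^sub>M lborel)"
    unfolding W1_def W2_def W3_def by measurable
  define I where "I W = (\<integral>\<^sup>+x. (\<integral>\<^sup>+y. F y * G (x - y) * W x y \<partial>lborel) \<partial>lborel)" for W
  have "I (\<lambda>x y. jweight a (x + A) * jweight b (y + B) * jweight c (x - y + C))
      \<le> I (\<lambda>x y. W1 x y + W2 x y + W3 x y)"
    unfolding I_def W1_def W2_def W3_def
    by (intro nn_integral_mono mult_left_mono dom) simp
  also have "\<dots> = I W1 + I W2 + I W3"
    by (simp add: I_def distrib_left nn_integral_add)
  also have "I W1 \<le> nn_L2norm F * nn_L2norm (jweight p1) * (nn_L2norm G * nn_L2norm (jweight q1))"
    unfolding I_def W1_def
    using conv_bound_input_weights[of F G "\<lambda>t. jweight p1 (t + B)" "\<lambda>t. jweight q1 (t + C)"] by simp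
  also have "I W2 \<le> nn_L2norm G * nn_L2norm (jweight p2) * (nn_L2norm F * nn_L2norm (jweight q2))"
  proof -
    have "(\<integral>\<^sup>+y. F y * G (x - y) * W2 x y \<partial>lborel)
        = (\<integral>\<^sup>+y. G y * F (x - y) * (jweight p2 (y + C) * jweight q2 (x + A)) \<partial>lborel)" for x
      using nn_integral_lborel_reflect[of "\<lambda>y. G y * F (x - y) * (jweight p2 (y + C) * jweight q2 (x + A))" x]
      by (simp add: W2_def ac_simps)
    then show ?thesis
      unfolding I_def
      using conv_bound_input_output_weights[of G F "\<lambda>t. jweight p2 (t + C)" "\<lambda>t. jweight q2 (t + A)"]
      by simp
  qed
  also have "I W3 \<le> nn_L2norm F * nn_L2norm (jweight p3) * (nn_L2norm G * nn_L2norm (jweight q3))"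
    unfolding I_def W3_def
    using conv_bound_input_output_weights[of F G "\<lambda>t. jweight p3 (t + B)" "\<lambda>t. jweight q3 (t + A)"] by simp
  finally show ?thesis
    by (simp add: I_def algebra_simps)
qed

lemma conv_integral_reweight:
  fixes u v :: "real \<Rightarrow> ennreal"
  assumes [measurable]: "u \<in> borel_measurable borel" "v \<in> borel_measurable borel"
  shows "(\<integral>\<^sup>+x. jweight a (x + A) * (\<integral>\<^sup>+y. u y * v (x - y) \<partial>lborel) \<partial>lborel)
    = (\<integral>\<^sup>+x. (\<integral>\<^sup>+y. (jweight (-b) (y + B) * u y) * (jweight (-c) (x - y + C) * v (x - y))
          * (jweight a (x + A) * jweight b (y + B) * jweight c (x - y + C)) \<partial>lborel) \<partial>lborel)"
proof -
  have "(jweight (-b) (y + B) * u y) * (jweight (-c) (x - y + C) * v (x - y))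
          * (jweight a (x + A) * jweight b (y + B) * jweight c (x - y + C))
      = (jweight (-b) (y + B) * jweight b (y + B)) * (jweight (-c) (x - y + C) * jweight c (x - y + C))
          * (jweight a (x + A) * (u y * v (x - y)))" for x y
    by (simp add: ac_simps)
  then show ?thesis
    by (simp add: jweight_inverse nn_integral_cmult)
qed

lemma lebesgue_norm_borel_version:
  fixes f :: "real \<Rightarrow> complex"
  assumes "f \<in> borel_measurable lebesgue"
  obtains u :: "real \<Rightarrow> ennreal"
  where "u \<in> borel_measurable borel" "AE x in lborel. ennreal (cmod (f x)) = u x"
proof -
  have "(\<lambda>x. ennreal (cmod (f x))) \<in> borel_measurable (completion lborel)"
    using assms by measurable
  from completion_ex_borel_measurable[OF this] show ?thesis
    using that by auto
qed

lemma AE_lborel_reflect: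
  fixes P :: "real \<Rightarrow> bool" and x :: real
  assumes "AE z in lborel. P z"
  shows "AE y in lborel. P (x - y)"
proof -
  from assms obtain N where N: "{z \<in> space lborel. \<not> P z} \<subseteq> N" "emeasure lborel N = 0" "N \<in> sets lborel"
    by (rule AE_E)
  then have [measurable]: "N \<in> sets borel" by simp
  have "AE y in lborel. x + (-1) * y \<notin> N"
    using N by (intro AE_borel_affine AE_not_in) (auto simp: null_sets_def)
  then show ?thesis
    by eventually_elim (use N in auto)
qed

lemma L2norm_weighted:
  fixes f :: "real \<Rightarrow> complex" and u :: "real \<Rightarrow> ennreal"
  assumes "AE x in lborel. ennreal (cmod (f x)) = u x"
  shows "L2norm (\<lambda>x. complex_of_real (jbr (x + B) powr b) * f x)
    = nn_L2norm (\<lambda>y. jweight (-b) (y + B) * u y)"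
proof -
  have "(\<integral>\<^sup>+x. ennreal ((cmod (complex_of_real (jbr (x + B) powr b) * f x))\<^sup>2) \<partial>lebesgue)
      = (\<integral>\<^sup>+x. ennreal ((cmod (complex_of_real (jbr (x + B) powr b) * f x))\<^sup>2) \<partial>lborel)"
    by (rule nn_integral_completion)
  also have "\<dots> = (\<integral>\<^sup>+y. (jweight (-b) (y + B) * u y)^2 \<partial>lborel)"
    using assms
    by (intro nn_integral_cong_AE, eventually_elim)
      (simp add: jweight_def norm_mult ennreal_mult ennreal_power[symmetric] power_mult_distrib)
  finally show ?thesis
    by (simp add: L2norm_def nn_L2norm_def ennsqrt_def Let_def)
qed

(* The weighted L^1 norm of f * g is bounded by the corresponding integral of
   |f| * |g| (the convolution integral may fail to converge, in which case conv
   is 0). *)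
lemma L1norm_weighted_conv_le:
  fixes f g :: "real \<Rightarrow> complex" and u v :: "real \<Rightarrow> ennreal"
  assumes hu: "AE x in lborel. ennreal (cmod (f x)) = u x"
    and hv: "AE x in lborel. ennreal (cmod (g x)) = v x"
  shows "L1norm (\<lambda>x. complex_of_real (jbr (x + A) powr (-a)) * conv f g x)
     \<le> (\<integral>\<^sup>+x. jweight a (x + A) * (\<integral>\<^sup>+y. u y * v (x - y) \<partial>lborel) \<partial>lborel)"
proof -
  have conv_le: "ennreal (cmod (conv f g x)) \<le> (\<integral>\<^sup>+y. u y * v (x - y) \<partial>lborel)" for x
  proof -
    have "ennreal (cmod (conv f g x)) \<le> (\<integral>\<^sup>+y. ennreal (cmod (f y * g (x - y))) \<partial>lebesgue)"
      unfolding conv_def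
      by (cases "integrable lebesgue (\<lambda>y. f y * g (x - y))")
        (simp_all add: integral_norm_bound_ennreal not_integrable_integral_eq)
    also have "\<dots> = (\<integral>\<^sup>+y. ennreal (cmod (f y * g (x - y))) \<partial>lborel)"
      by (rule nn_integral_completion)
    also have "\<dots> = (\<integral>\<^sup>+y. u y * v (x - y) \<partial>lborel)"
      using hu AE_lborel_reflect[OF hv, of x]
      by (intro nn_integral_cong_AE, eventually_elim) (simp add: norm_mult ennreal_mult)
    finally show ?thesis .
  qed
  have "L1norm (\<lambda>x. complex_of_real (jbr (x + A) powr (-a)) * conv f g x)
      = (\<integral>\<^sup>+x. jweight a (x + A) * ennreal (cmod (conv f g x)) \<partial>lborel)"
    unfolding L1norm_def nn_integral_completion
    by (simp add: norm_mult ennreal_mult jweight_def)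
  also have "\<dots> \<le> (\<integral>\<^sup>+x. jweight a (x + A) * (\<integral>\<^sup>+y. u y * v (x - y) \<partial>lborel) \<partial>lborel)"
    by (intro nn_integral_mono mult_left_mono conv_le) simp
  finally show ?thesis .
qed

lemma weighted_conv_estimate:
  fixes f g :: "real \<Rightarrow> complex"
  assumes "f \<in> borel_measurable lebesgue" "g \<in> borel_measurable lebesgue"
    and dom: "\<And>x y z. jweight a z * jweight b x * jweight c y
      \<le> jweight p1 x * jweight q1 y + jweight p2 y * jweight q2 z + jweight p3 x * jweight q3 z"
  shows "L1norm (\<lambda>x. complex_of_real (jbr (x + A) powr (-a)) * conv f g x)
    \<le> (nn_L2norm (jweight p1) * nn_L2norm (jweight q1) + nn_L2norm (jweight p2) * nn_L2norm (jweight q2)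
        + nn_L2norm (jweight p3) * nn_L2norm (jweight q3))
      * L2norm (\<lambda>x. complex_of_real (jbr (x + B) powr b) * f x)
      * L2norm (\<lambda>x. complex_of_real (jbr (x + C) powr c) * g x)"
proof -
  obtain u v where [measurable]: "u \<in> borel_measurable borel" "v \<in> borel_measurable borel"
    and hu: "AE x in lborel. ennreal (cmod (f x)) = u x"
    and hv: "AE x in lborel. ennreal (cmod (g x)) = v x"
    using assms(1,2) by (metis lebesgue_norm_borel_version)
  define F where "F y = jweight (-b) (y + B) * u y" for y
  define G where "G z = jweight (-c) (z + C) * v z" for z
  have [measurable]: "F \<in> borel_measurable borel" "G \<in> borel_measurable borel"
    unfolding F_def G_def by measurable
  have "L1norm (\<lambda>x. complex_of_real (jbr (x + A) powr (-a)) * conv f g x)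
     \<le> (\<integral>\<^sup>+x. jweight a (x + A) * (\<integral>\<^sup>+y. u y * v (x - y) \<partial>lborel) \<partial>lborel)"
    by (rule L1norm_weighted_conv_le[OF hu hv])
  also have "\<dots> = (\<integral>\<^sup>+x. (\<integral>\<^sup>+y. F y * G (x - y)
        * (jweight a (x + A) * jweight b (y + B) * jweight c (x - y + C)) \<partial>lborel) \<partial>lborel)"
    unfolding F_def G_def by (rule conv_integral_reweight) measurable
  also have "\<dots> \<le> (nn_L2norm (jweight p1) * nn_L2norm (jweight q1) + nn_L2norm (jweight p2) * nn_L2norm (jweight q2)
        + nn_L2norm (jweight p3) * nn_L2norm (jweight q3)) * nn_L2norm F * nn_L2norm G"
    by (rule trilinear_weighted_bound) (simp_all add: dom)
  also have "nn_L2norm F = L2norm (\<lambda>x. complex_of_real (jbr (x + B) powr b) * f x)"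
    unfolding F_def[abs_def] by (rule L2norm_weighted[OF hu, symmetric])
  also have "nn_L2norm G = L2norm (\<lambda>x. complex_of_real (jbr (x + C) powr c) * g x)"
    unfolding G_def[abs_def] by (rule L2norm_weighted[OF hv, symmetric])
  finally show ?thesis .
qed

theorem lemma2p3:
  fixes a b c :: real
  assumes "a \<ge> 0" "b \<ge> 0" "c \<ge> 0"
    and "min (a + b) (min (b + c) (c + a)) > 1/2"
    and "a + b + c > 1"
  shows "\<exists>K::real. \<forall>A B C :: real. \<forall>f g :: real \<Rightarrow> complex.
           f \<in> borel_measurable lebesgue \<longrightarrow> g \<in> borel_measurable lebesgue \<longrightarrow>
           L1norm (\<lambda>x. complex_of_real (jbr (x + A) powr (-a)) * conv f g x)
             \<le> ennreal K * L2norm (\<lambda>x. complex_of_real (jbr (x + B) powr b) * f x)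
                        * L2norm (\<lambda>x. complex_of_real (jbr (x + C) powr c) * g x)"
proof -
  obtain p1 q1 p2 q2 p3 q3 where exps: "p1 > 1/2" "q1 > 1/2" "p2 > 1/2" "q2 > 1/2" "p3 > 1/2" "q3 > 1/2"
    and dom: "\<And>X Y Z. 1 \<le> X \<Longrightarrow> 1 \<le> Y \<Longrightarrow> 1 \<le> Z \<Longrightarrow>
      Z powr (-a) * X powr (-b) * Y powr (-c) \<le>
      X powr (-p1) * Y powr (-q1) + Y powr (-p2) * Z powr (-q2) + X powr (-p3) * Z powr (-q3)"
    by (rule three_term_domination[of a b c]) (use assms in auto)
  define K where "K = nn_L2norm (jweight p1) * nn_L2norm (jweight q1) + nn_L2norm (jweight p2) * nn_L2norm (jweight q2)
        + nn_L2norm (jweight p3) * nn_L2norm (jweight q3)"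
  have "K < \<infinity>"
    unfolding K_def using exps[THEN nn_L2norm_jweight_finite] by (simp add: ennreal_mult_less_top)
  then have "ennreal (enn2real K) = K" by simp
  then show ?thesis
    using weighted_conv_estimate[OF _ _ jweight_domination[OF dom]] unfolding K_def[symmetric]
    by (intro exI[of _ "enn2real K"]) simp
qed

end
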